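(* Let $G$ be a finite symmetric two-player game with pure strategies $I=\{1,\dots,N\}$ and payoff matrix $U$, and let $G'$ be a game built on $G$ by adding mixed strategies as new pure strategies, with associated mixed strategies $p^k\in S_N$, $k\in I'=\{1,\dots,N'\}$. Let $x'(\cdot)$ be a solution of the best-response dynamics in $G'$ and define $x(t):=\sum_{k=1}^{N'}x'_k(t)\,p^k\in S_N$. Then $x(\cdot)$ is a solution of the best-response dynamics in $G$.
   Context: $G'$ with pure strategy set $I'=\{1,\dots,N,N+1,\dots,N'\}$ and payoff matrix $U'$ is built on $G$ by adding mixed strategies as new pure strategies if to each $i\in I'$ is associated $p^i\in S_N$ such that $e'_i\cdot U'e'_j=p^i\cdot Up^j$ for all $i,j\in I'$ (with $e'_i$ the vertices of $S_{N'}$), and $p^i=e_i$ for $1\le i\le N$. Best-response dynamics in a game with payoff matrix $U$: an absolutely continuous function $x(\cdot)$ with $\dot x(t)\in BR(x(t))-x(t)$ for almost every $t$, where $BR(x)=\{y\in S_N: y\cdot Ux=\max_{z\in S_N}z\cdot Ux\}$. *)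

theory Defs
  imports "HOL-Analysis.Analysis"
begin

text \<open>Strategies are indexed by natural numbers; a (mixed) strategy profile in a game
with N pure strategies is a function nat => real that vanishes outside 0..N-1.
Pure strategies 1..N of the paper correspond to indices 0..N-1.\<close>

definition strat_simplex :: "nat \<Rightarrow> (nat \<Rightarrow> real) set" where
  "strat_simplex N = {p. (\<forall>i<N. 0 \<le> p i) \<and> (\<Sum>i<N. p i) = 1 \<and> (\<forall>i\<ge>N. p i = 0)}"

definition unitv :: "nat \<Rightarrow> nat \<Rightarrow> real" where
  "unitv i = (\<lambda>j. if j = i then 1 else 0)"

definition pay :: "nat \<Rightarrow> (nat \<Rightarrow> nat \<Rightarrow> real) \<Rightarrow> (nat \<Rightarrow> real) \<Rightarrow> (nat \<Rightarrow> real) \<Rightarrow> real" where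
  "pay N U y x = (\<Sum>i<N. \<Sum>j<N. y i * U i j * x j)"

definition BR :: "nat \<Rightarrow> (nat \<Rightarrow> nat \<Rightarrow> real) \<Rightarrow> (nat \<Rightarrow> real) \<Rightarrow> (nat \<Rightarrow> real) set" where
  "BR N U x = {y \<in> strat_simplex N. \<forall>z \<in> strat_simplex N. pay N U z x \<le> pay N U y x}"

definition built_on :: "nat \<Rightarrow> (nat \<Rightarrow> nat \<Rightarrow> real) \<Rightarrow> nat \<Rightarrow> (nat \<Rightarrow> nat \<Rightarrow> real)
    \<Rightarrow> (nat \<Rightarrow> nat \<Rightarrow> real) \<Rightarrow> bool" where
  "built_on N U N' U' p \<longleftrightarrow> N \<le> N' \<and> (\<forall>k<N'. p k \<in> strat_simplex N) \<and>
     (\<forall>i<N'. \<forall>j<N'. U' i j = pay N U (p i) (p j)) \<and> (\<forall>i<N. p i = unitv i)"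

definition abs_cont_on :: "nat \<Rightarrow> real \<Rightarrow> real \<Rightarrow> (real \<Rightarrow> nat \<Rightarrow> real) \<Rightarrow> bool" where
  "abs_cont_on N a b x \<longleftrightarrow>
    (\<forall>\<epsilon>>0. \<exists>\<delta>>0. \<forall>(n::nat) (l::nat \<Rightarrow> real) r.
       (\<forall>k<n. a \<le> l k \<and> l k \<le> r k \<and> r k \<le> b) \<and>
       (\<forall>k<n. \<forall>k'<n. k \<noteq> k' \<longrightarrow> r k \<le> l k' \<or> r k' \<le> l k) \<and>
       (\<Sum>k<n. r k - l k) < \<delta>
       \<longrightarrow> (\<Sum>k<n. \<Sum>i<N. \<bar>x (r k) i - x (l k) i\<bar>) < \<epsilon>)"

definition loc_abs_cont_on :: "nat \<Rightarrow> real set \<Rightarrow> (real \<Rightarrow> nat \<Rightarrow> real) \<Rightarrow> bool" where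
  "loc_abs_cont_on N T x \<longleftrightarrow> (\<forall>a b. {a..b} \<subseteq> T \<longrightarrow> abs_cont_on N a b x)"

definition br_solution :: "nat \<Rightarrow> (nat \<Rightarrow> nat \<Rightarrow> real) \<Rightarrow> real set \<Rightarrow> (real \<Rightarrow> nat \<Rightarrow> real) \<Rightarrow> bool" where
  "br_solution N U T x \<longleftrightarrow>
     (\<forall>t\<in>T. x t \<in> strat_simplex N) \<and> loc_abs_cont_on N T x \<and>
     (AE t in lborel. t \<in> T \<longrightarrow>
        (\<exists>y \<in> BR N U (x t). \<forall>i<N. ((\<lambda>s. x s i) has_real_derivative (y i - x t i)) (at t)))"

end

theory Submission
  imports Defs
begin

text \<open>The map a \<mapsto> \<Sum>k a(k) p(k) from strategies of G' to strategies of G is linear,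
maps the simplex into the simplex, is 1-Lipschitz for the l1-norms and fixes the strategies of G.
Since the payoffs of G' are by construction those of G pulled back along this map, it carries
best responses to best responses, and by linearity it carries derivatives of x' to derivatives
of x, so the best-response differential inclusion is transported from G' to G.\<close>

definition mix :: "nat \<Rightarrow> (nat \<Rightarrow> real) \<Rightarrow> (nat \<Rightarrow> nat \<Rightarrow> real) \<Rightarrow> nat \<Rightarrow> real" where
  "mix M a p = (\<lambda>i. \<Sum>k<M. a k * p k i)"

lemma mix_diff: "mix M a p i - mix M b p i = mix M (\<lambda>k. a k - b k) p i"
  by (simp add: mix_def sum_subtractf left_diff_distrib)

lemma pay_mix:
  "pay N U (mix M a p) (mix M b p) = (\<Sum>k<M. \<Sum>l<M. a k * b l * pay N U (p k) (p l))"
proof -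
  let ?F = "\<lambda>i j k l. a k * b l * (p k i * U i j * p l j)"
  have "pay N U (mix M a p) (mix M b p) = (\<Sum>i<N. \<Sum>j<N. \<Sum>k<M. \<Sum>l<M. ?F i j k l)"
    unfolding pay_def mix_def by (simp add: sum_distrib_left sum_distrib_right mult_ac)
  also have "\<dots> = (\<Sum>i<N. \<Sum>k<M. \<Sum>j<N. \<Sum>l<M. ?F i j k l)"
    by (rule sum.cong[OF refl], rule sum.swap)
  also have "\<dots> = (\<Sum>i<N. \<Sum>k<M. \<Sum>l<M. \<Sum>j<N. ?F i j k l)"
    by (rule sum.cong[OF refl], rule sum.cong[OF refl], rule sum.swap)
  also have "\<dots> = (\<Sum>k<M. \<Sum>i<N. \<Sum>l<M. \<Sum>j<N. ?F i j k l)"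
    by (rule sum.swap)
  also have "\<dots> = (\<Sum>k<M. \<Sum>l<M. \<Sum>i<N. \<Sum>j<N. ?F i j k l)"
    by (rule sum.cong[OF refl], rule sum.swap)
  also have "\<dots> = (\<Sum>k<M. \<Sum>l<M. a k * b l * pay N U (p k) (p l))"
    unfolding pay_def by (simp add: sum_distrib_left)
  finally show ?thesis .
qed

lemma built_on_pay:
  assumes "built_on N U N' U' p"
  shows "pay N' U' a b = pay N U (mix N' a p) (mix N' b p)"
  using assms unfolding pay_mix pay_def[of N' U'] built_on_def
  by (intro sum.cong refl) (simp add: mult_ac)

lemma mix_in_strat_simplex:
  assumes a: "a \<in> strat_simplex M" and p: "\<forall>k<M. p k \<in> strat_simplex N"
  shows "mix M a p \<in> strat_simplex N"
proof -
  have "(\<Sum>i<N. \<Sum>k<M. a k * p k i) = (\<Sum>k<M. a k * (\<Sum>i<N. p k i))"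
    by (subst sum.swap) (simp add: sum_distrib_left)
  also have "\<dots> = 1"
    using a p by (simp add: strat_simplex_def)
  finally show ?thesis
    using a p unfolding strat_simplex_def mix_def by (auto intro!: sum_nonneg)
qed

lemma sum_abs_mix_le:
  assumes "\<forall>k<M. p k \<in> strat_simplex N"
  shows "(\<Sum>i<N. \<bar>mix M d p i\<bar>) \<le> (\<Sum>k<M. \<bar>d k\<bar>)"
proof -
  have "(\<Sum>i<N. \<bar>mix M d p i\<bar>) \<le> (\<Sum>i<N. \<Sum>k<M. \<bar>d k\<bar> * p k i)"
    unfolding mix_def
    by (intro sum_mono order_trans[OF sum_abs]) (use assms in \<open>simp add: abs_mult strat_simplex_def\<close>)
  also have "\<dots> = (\<Sum>k<M. \<bar>d k\<bar> * (\<Sum>i<N. p k i))"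
    by (subst sum.swap) (simp add: sum_distrib_left)
  also have "\<dots> = (\<Sum>k<M. \<bar>d k\<bar>)"
    using assms by (simp add: strat_simplex_def)
  finally show ?thesis .
qed

lemma strat_simplex_mono:
  assumes z: "z \<in> strat_simplex N" and "N \<le> M"
  shows "z \<in> strat_simplex M"
proof -
  have "(\<Sum>i<M. z i) = (\<Sum>i<N. z i)"
    using assms by (intro sum.mono_neutral_right) (auto simp: strat_simplex_def)
  then show ?thesis
    using assms unfolding strat_simplex_def by (auto simp: not_le[symmetric])
qed

lemma mix_unitv:
  assumes z: "z \<in> strat_simplex N" and "N \<le> M" and "\<forall>i<N. p i = unitv i"
  shows "mix M z p = z"
proof
  fix i
  have "mix M z p i = (\<Sum>k<N. z k * p k i)"
    unfolding mix_def using assms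
    by (intro sum.mono_neutral_right) (auto simp: strat_simplex_def)
  also have "\<dots> = (\<Sum>k<N. if k = i then z k else 0)"
    using assms by (intro sum.cong) (auto simp: unitv_def)
  also have "\<dots> = z i"
    using z by (simp add: strat_simplex_def)
  finally show "mix M z p i = z i" .
qed

lemma BR_mix:
  assumes G': "built_on N U N' U' p" and y': "y' \<in> BR N' U' x'"
  shows "mix N' y' p \<in> BR N U (mix N' x' p)"
  unfolding BR_def
proof (intro CollectI conjI ballI)
  show "mix N' y' p \<in> strat_simplex N"
    using G' y' by (intro mix_in_strat_simplex) (auto simp: BR_def built_on_def)
next
  fix z assume z: "z \<in> strat_simplex N"
  have "z \<in> strat_simplex N'" "mix N' z p = z"
    using G' z strat_simplex_mono mix_unitv by (auto simp: built_on_def)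
  then have "pay N U z (mix N' x' p) = pay N' U' z x'"
    using built_on_pay[OF G'] by simp
  also have "\<dots> \<le> pay N' U' y' x'"
    using y' \<open>z \<in> strat_simplex N'\<close> by (auto simp: BR_def)
  also have "\<dots> = pay N U (mix N' y' p) (mix N' x' p)"
    using built_on_pay[OF G'] .
  finally show "pay N U z (mix N' x' p) \<le> pay N U (mix N' y' p) (mix N' x' p)" .
qed

lemma has_real_derivative_mix:
  assumes "\<forall>k<M. ((\<lambda>s. x s k) has_real_derivative v k) (at t)"
  shows "((\<lambda>s. mix M (x s) p i) has_real_derivative mix M v p i) (at t)"
  unfolding mix_def using assms by (auto intro!: DERIV_sum DERIV_cmult_right)

lemma abs_cont_on_mix:
  assumes p: "\<forall>k<M. p k \<in> strat_simplex N" and x: "abs_cont_on M a b x"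
  shows "abs_cont_on N a b (\<lambda>t. mix M (x t) p)"
  unfolding abs_cont_on_def
proof (intro allI impI)
  let ?admissible = "\<lambda>\<delta> (n::nat) (l::nat \<Rightarrow> real) r.
       (\<forall>k<n. a \<le> l k \<and> l k \<le> r k \<and> r k \<le> b) \<and>
       (\<forall>k<n. \<forall>k'<n. k \<noteq> k' \<longrightarrow> r k \<le> l k' \<or> r k' \<le> l k) \<and>
       (\<Sum>k<n. r k - l k) < \<delta>"
  fix \<epsilon> :: real assume "\<epsilon> > 0"
  with x obtain \<delta> where "\<delta> > 0" and \<delta>: "\<And>n l r. ?admissible \<delta> n l r
       \<Longrightarrow> (\<Sum>k<n. \<Sum>i<M. \<bar>x (r k) i - x (l k) i\<bar>) < \<epsilon>"
    unfolding abs_cont_on_def by blast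
  have bound: "(\<Sum>k<n. \<Sum>i<N. \<bar>mix M (x (r k)) p i - mix M (x (l k)) p i\<bar>)
      \<le> (\<Sum>k<n. \<Sum>i<M. \<bar>x (r k) i - x (l k) i\<bar>)" for n and l r :: "nat \<Rightarrow> real"
    unfolding mix_diff by (intro sum_mono sum_abs_mix_le p)
  have "(\<Sum>k<n. \<Sum>i<N. \<bar>mix M (x (r k)) p i - mix M (x (l k)) p i\<bar>) < \<epsilon>"
    if "?admissible \<delta> n l r" for n l r
    by (rule le_less_trans[OF bound \<delta>[OF that]])
  with \<open>\<delta> > 0\<close> show "\<exists>\<delta>>0. \<forall>n l r. ?admissible \<delta> n l r
       \<longrightarrow> (\<Sum>k<n. \<Sum>i<N. \<bar>mix M (x (r k)) p i - mix M (x (l k)) p i\<bar>) < \<epsilon>"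
    by blast
qed

lemma loc_abs_cont_on_mix:
  assumes "\<forall>k<M. p k \<in> strat_simplex N" and "loc_abs_cont_on M T x"
  shows "loc_abs_cont_on N T (\<lambda>t. mix M (x t) p)"
  using assms abs_cont_on_mix unfolding loc_abs_cont_on_def by blast

theorem proposition7:
  fixes N N' :: nat and U U' :: "nat \<Rightarrow> nat \<Rightarrow> real"
    and p :: "nat \<Rightarrow> nat \<Rightarrow> real" and T :: "real set"
    and x' :: "real \<Rightarrow> nat \<Rightarrow> real"
  assumes "built_on N U N' U' p"
    and "is_interval T"
    and "br_solution N' U' T x'"
  shows "br_solution N U T (\<lambda>t i. \<Sum>k<N'. x' t k * p k i)"
proof -
  have p: "\<forall>k<N'. p k \<in> strat_simplex N"
    using assms(1) by (simp add: built_on_def)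
  have "AE t in lborel. t \<in> T \<longrightarrow> (\<exists>y \<in> BR N U (mix N' (x' t) p).
      \<forall>i<N. ((\<lambda>s. mix N' (x' s) p i) has_real_derivative (y i - mix N' (x' t) p i)) (at t))"
    using assms(3) unfolding br_solution_def
  proof (elim conjE AE_mp, intro AE_I2 impI)
    fix t assume "t \<in> T \<longrightarrow> (\<exists>y' \<in> BR N' U' (x' t).
        \<forall>k<N'. ((\<lambda>s. x' s k) has_real_derivative (y' k - x' t k)) (at t))" and "t \<in> T"
    then obtain y' where "y' \<in> BR N' U' (x' t)"
      and "\<forall>k<N'. ((\<lambda>s. x' s k) has_real_derivative (y' k - x' t k)) (at t)" by blast
    then have "mix N' y' p \<in> BR N U (mix N' (x' t) p)"
      and "\<forall>i<N. ((\<lambda>s. mix N' (x' s) p i) has_real_derivative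
              (mix N' y' p i - mix N' (x' t) p i)) (at t)"
      using BR_mix[OF assms(1)] has_real_derivative_mix[of N' x' "\<lambda>k. y' k - x' t k" t p]
      by (simp_all add: mix_diff)
    then show "\<exists>y \<in> BR N U (mix N' (x' t) p).
        \<forall>i<N. ((\<lambda>s. mix N' (x' s) p i) has_real_derivative (y i - mix N' (x' t) p i)) (at t)"
      by blast
  qed
  with assms(3) p show ?thesis
    unfolding br_solution_def mix_def[symmetric]
    by (simp add: mix_in_strat_simplex loc_abs_cont_on_mix)
qed

end
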